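(* For every $M,N\ge 0$, the poset of shuffles $W_{MN}$ is locally rank-symmetric: for every interval $[u,v]$ of $W_{MN}$ and every $r\ge 0$, the number of elements of $[u,v]$ of rank $\rho(u)+r$ equals the number of elements of $[u,v]$ of rank $\rho(v)-r$.
   Context: Let $\mathcal{A}=\{a_1,\dots,a_M\}$ and $\mathcal{X}=\{x_1,\dots,x_N\}$ be disjoint finite sets. A shuffle word is a word (possibly empty) with distinct letters from $\mathcal{A}\cup\mathcal{X}$ in which the letters from $\mathcal{A}$ appear in increasing order of subscripts and the letters from $\mathcal{X}$ appear in increasing order of subscripts. The poset of shuffles $W_{MN}$ is the set of shuffle words ordered by the reflexive-transitive closure of: $w$ is covered by $w'$ iff $w'$ is obtained from $w$ by deleting a letter of $\mathcal{A}$ or inserting a letter of $\mathcal{X}$. It is ranked with rank function $\rho(w)=(M-\#(\{w\}\cap\mathcal{A}))+\#(\{w\}\cap\mathcal{X})$, where $\{w\}$ is the set of letters of $w$. *)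

theory Defs
  imports Main
begin

text \<open>Letters: A i stands for a_i, X j stands for x_j.\<close>
datatype letter = A nat | X nat

fun asubs :: "letter list \<Rightarrow> nat list" where
  "asubs [] = []"
| "asubs (A i # w) = i # asubs w"
| "asubs (X j # w) = asubs w"

fun xsubs :: "letter list \<Rightarrow> nat list" where
  "xsubs [] = []"
| "xsubs (A i # w) = xsubs w"
| "xsubs (X j # w) = j # xsubs w"

definition shuffle_word :: "nat \<Rightarrow> nat \<Rightarrow> letter list \<Rightarrow> bool" where
  "shuffle_word M N w \<longleftrightarrow> distinct w
     \<and> (\<forall>i\<in>set (asubs w). 1 \<le> i \<and> i \<le> M)
     \<and> (\<forall>j\<in>set (xsubs w). 1 \<le> j \<and> j \<le> N)
     \<and> sorted_wrt (<) (asubs w) \<and> sorted_wrt (<) (xsubs w)"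

definition W :: "nat \<Rightarrow> nat \<Rightarrow> letter list set" where
  "W M N = {w. shuffle_word M N w}"

definition covers :: "nat \<Rightarrow> nat \<Rightarrow> letter list \<Rightarrow> letter list \<Rightarrow> bool" where
  "covers M N w w' \<longleftrightarrow> w \<in> W M N \<and> w' \<in> W M N \<and>
     ((\<exists>i xs ys. w = xs @ [A i] @ ys \<and> w' = xs @ ys) \<or>
      (\<exists>j xs ys. w' = xs @ [X j] @ ys \<and> w = xs @ ys))"

definition shuffle_le :: "nat \<Rightarrow> nat \<Rightarrow> letter list \<Rightarrow> letter list \<Rightarrow> bool" where
  "shuffle_le M N = (covers M N)\<^sup>*\<^sup>*"

definition shuffle_rank :: "nat \<Rightarrow> nat \<Rightarrow> letter list \<Rightarrow> nat" where
  "shuffle_rank M N w = (M - length (asubs w)) + length (xsubs w)"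

definition shuffle_interval :: "nat \<Rightarrow> nat \<Rightarrow> letter list \<Rightarrow> letter list \<Rightarrow> letter list set" where
  "shuffle_interval M N u v = {w \<in> W M N. shuffle_le M N u w \<and> shuffle_le M N w v}"

end

(*
  The order has a letter-wise description: u <= w iff every a-letter of w occurs in u, every
  x-letter of u occurs in w, and u and w list their common letters in the same order. Let Q(u,v)
  be the rank generating polynomial of [u,v], with exponents measured from the rank of u.
  Splitting [u,v] according to the first letters of u and v gives Q(c u', c v') = Q(u', v');
  Q = (1 + t) Q' when only u starts with a letter a missing from v (or only v starts with a
  letter x missing from u); and, when both happen,
    Q(a u', x v') = (1 + t) Q(u', x v') + (1 + t) Q(a u', v') - (1 + t + t^2) Q(u', v').
  Polynomials palindromic about a fixed degree are closed under sums and differences, and the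
  degrees add under products, so by induction Q(u,v) is palindromic of degree rank v - rank u.
*)

theory Submission
  imports Defs "HOL-Computational_Algebra.Polynomial"
begin

section \<open>Palindromic polynomials\<close>

definition palindromic :: "nat \<Rightarrow> 'a::zero poly \<Rightarrow> bool" where
  "palindromic n p \<longleftrightarrow> (\<forall>k. coeff p k = (if k \<le> n then coeff p (n - k) else 0))"

lemma palindromic_coeff:
  "palindromic n p \<Longrightarrow> coeff p k = (if k \<le> n then coeff p (n - k) else 0)"
  unfolding palindromic_def by (rule spec)

lemma palindromicD: "palindromic n p \<Longrightarrow> k \<le> n \<Longrightarrow> coeff p k = coeff p (n - k)"
  using palindromic_coeff[of n p k] by simp

lemma palindromic_coeff_eq_0: "palindromic n p \<Longrightarrow> n < k \<Longrightarrow> coeff p k = 0"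
  using palindromic_coeff[of n p k] by simp

lemma palindromic_add:
  assumes "palindromic n p" "palindromic n q"
  shows "palindromic n (p + q)"
  unfolding palindromic_def
proof
  fix k
  show "coeff (p + q) k = (if k \<le> n then coeff (p + q) (n - k) else 0)"
    using palindromic_coeff[OF assms(1), of k] palindromic_coeff[OF assms(2), of k] by simp
qed

lemma palindromic_diff:
  fixes p q :: "'a::ab_group_add poly"
  assumes "palindromic n p" "palindromic n q"
  shows "palindromic n (p - q)"
  unfolding palindromic_def
proof
  fix k
  show "coeff (p - q) k = (if k \<le> n then coeff (p - q) (n - k) else 0)"
    using palindromic_coeff[OF assms(1), of k] palindromic_coeff[OF assms(2), of k] by simp
qed

lemma coeff_mult_atMost:
  assumes "\<And>i. n < i \<Longrightarrow> coeff p i = 0"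
  shows "coeff (p * q) k = (\<Sum>i\<le>n. if i \<le> k then coeff p i * coeff q (k - i) else 0)"
proof -
  have "coeff (p * q) k = (\<Sum>i\<le>min k n. coeff p i * coeff q (k - i))"
    unfolding coeff_mult using assms
    by (intro sum.mono_neutral_right) (auto, metis mult_zero_left not_le)
  also have "\<dots> = (\<Sum>i\<le>n. if i \<le> k then coeff p i * coeff q (k - i) else 0)"
    by (subst sum.mono_neutral_right[of "{..n}" "{..min k n}"]) auto
  finally show ?thesis .
qed

lemma palindromic_mult:
  fixes p q :: "'a::comm_semiring_0 poly"
  assumes p: "palindromic n p" and q: "palindromic m q"
  shows "palindromic (n + m) (p * q)"
proof -
  define c where "c k = (\<Sum>i\<le>n. if i \<le> k then coeff p i * coeff q (k - i) else 0)" for k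
  have coeff_eq: "coeff (p * q) k = c k" for k
    unfolding c_def using palindromic_coeff_eq_0[OF p] by (rule coeff_mult_atMost)
  have term_eq: "(if n - i \<le> n + m - k then coeff p (n - i) * coeff q (n + m - k - (n - i)) else 0)
      = (if i \<le> k then coeff p i * coeff q (k - i) else 0)" if "i \<le> n" "k \<le> n + m" for i k
  proof (cases "i \<le> k")
    case True
    have "n + m - k - (n - i) = m - (k - i)" "n - i \<le> n + m - k \<longleftrightarrow> k - i \<le> m"
      using that True by auto
    then show ?thesis
      using True palindromicD[OF p \<open>i \<le> n\<close>] palindromicD[OF q, of "k - i"]
        palindromic_coeff_eq_0[OF q, of "k - i"] by auto
  next
    case False
    then show ?thesis
      using that palindromic_coeff_eq_0[OF q, of "n + m - k - (n - i)"] by auto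
  qed
  \<comment> \<open>Reflecting the summation index i to n - i turns c (n + m - k) into c k.\<close>
  have "c (n + m - k) = c k" if "k \<le> n + m" for k
  proof -
    have "c (n + m - k) = (\<Sum>i\<le>n.
        if n - i \<le> n + m - k then coeff p (n - i) * coeff q (n + m - k - (n - i)) else 0)"
      unfolding c_def by (rule sum.reindex_bij_witness[where i="\<lambda>i. n - i" and j="\<lambda>i. n - i"]) auto
    also have "\<dots> = c k"
      unfolding c_def using that by (intro sum.cong refl term_eq) auto
    finally show ?thesis .
  qed
  moreover have "c k = 0" if "n + m < k" for k
    unfolding c_def using that palindromic_coeff_eq_0[OF q, of "k - i" for i] by (intro sum.neutral) auto
  ultimately show ?thesis
    by (simp add: palindromic_def coeff_eq)
qed

lemma palindromic_one: "palindromic 0 1"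
  by (simp add: palindromic_def)

lemma palindromic_linear: "palindromic 1 [:1, 1:]"
  by (simp add: palindromic_def coeff_pCons split: nat.split)

lemma palindromic_quadratic: "palindromic 2 [:1, 1, 1:]"
  by (simp add: palindromic_def coeff_pCons split: nat.split)

lemma palindromic_level_card_symmetric:
  fixes f :: "'a \<Rightarrow> nat"
  assumes palindromic: "palindromic n p"
    and coeff: "\<And>k. coeff p k = int (card {x \<in> S. f x = a + k})"
    and lower: "\<And>x. x \<in> S \<Longrightarrow> a \<le> f x"
  shows "card {x \<in> S. f x = a + r} = card {x \<in> S. f x + r = a + n}"
proof (cases "r \<le> n")
  case True
  then have "{x \<in> S. f x + r = a + n} = {x \<in> S. f x = a + (n - r)}"
    by auto
  then show ?thesis
    using palindromicD[OF palindromic True] coeff by simp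
next
  case False
  then have empty: "{x \<in> S. f x + r = a + n} = {}"
    using lower by fastforce
  show ?thesis
    unfolding empty using palindromic_coeff_eq_0[OF palindromic, of r] False coeff by simp
qed

section \<open>Shuffle words\<close>

lemma set_asubs [simp]: "set (asubs w) = {i. A i \<in> set w}"
  by (induction w rule: asubs.induct) auto

lemma set_xsubs [simp]: "set (xsubs w) = {j. X j \<in> set w}"
  by (induction w rule: xsubs.induct) auto

lemma Nil_in_W [simp]: "[] \<in> W M N"
  by (simp add: W_def shuffle_word_def)

lemma Cons_A_in_W_iff:
  "A i # w \<in> W M N \<longleftrightarrow> w \<in> W M N \<and> 1 \<le> i \<and> i \<le> M \<and> (\<forall>k. A k \<in> set w \<longrightarrow> i < k)"
  by (auto simp: W_def shuffle_word_def)

lemma Cons_X_in_W_iff: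
  "X j # w \<in> W M N \<longleftrightarrow> w \<in> W M N \<and> 1 \<le> j \<and> j \<le> N \<and> (\<forall>k. X k \<in> set w \<longrightarrow> j < k)"
  by (auto simp: W_def shuffle_word_def)

lemma W_distinct: "w \<in> W M N \<Longrightarrow> distinct w"
  by (simp add: W_def shuffle_word_def)

lemma W_ConsD: "l # w \<in> W M N \<Longrightarrow> w \<in> W M N \<and> l \<notin> set w"
  by (cases l) (auto simp: Cons_A_in_W_iff Cons_X_in_W_iff)

lemma filter_in_W: "w \<in> W M N \<Longrightarrow> filter P w \<in> W M N"
proof (induction w)
  case (Cons l w)
  then have "w \<in> W M N" using W_ConsD by blast
  with Cons show ?case by (cases l) (auto simp: Cons_A_in_W_iff Cons_X_in_W_iff)
qed simp

lemma removeAll_in_W: "w \<in> W M N \<Longrightarrow> removeAll l w \<in> W M N"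
  by (simp add: removeAll_filter_not_eq filter_in_W)

lemma finite_W: "finite (W M N)"
proof -
  define L where "L = A ` {1..M} \<union> X ` {1..N}"
  have "W M N \<subseteq> {w. set w \<subseteq> L \<and> length w \<le> card L}"
  proof
    fix w assume w: "w \<in> W M N"
    have "set w \<subseteq> L"
    proof
      fix l assume "l \<in> set w"
      with w show "l \<in> L" by (cases l) (auto simp: L_def W_def shuffle_word_def)
    qed
    moreover have "length w \<le> card L"
      using distinct_card[OF W_distinct[OF w]] card_mono[OF _ \<open>set w \<subseteq> L\<close>] by (simp add: L_def)
    ultimately show "w \<in> {w. set w \<subseteq> L \<and> length w \<le> card L}" by simp
  qed
  moreover have "finite {w. set w \<subseteq> L \<and> length w \<le> card L}"
    by (rule finite_lists_length_le) (simp add: L_def)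
  ultimately show ?thesis by (rule finite_subset)
qed

lemma covers_iff_removeAll:
  "covers M N w w' \<longleftrightarrow> w \<in> W M N \<and> w' \<in> W M N \<and>
     ((\<exists>i. A i \<in> set w \<and> w' = removeAll (A i) w) \<or> (\<exists>j. X j \<in> set w' \<and> w = removeAll (X j) w'))"
proof -
  have split_iff: "(\<exists>xs ys. v = xs @ l # ys \<and> v' = xs @ ys) \<longleftrightarrow> l \<in> set v \<and> v' = removeAll l v"
    if "distinct v" for v v' :: "letter list" and l
  proof
    assume "\<exists>xs ys. v = xs @ l # ys \<and> v' = xs @ ys"
    with that show "l \<in> set v \<and> v' = removeAll l v" by auto
  next
    assume l: "l \<in> set v \<and> v' = removeAll l v"
    then obtain xs ys where "v = xs @ l # ys" by (auto dest: split_list)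
    with l that show "\<exists>xs ys. v = xs @ l # ys \<and> v' = xs @ ys" by auto
  qed
  show ?thesis
  proof (cases "w \<in> W M N \<and> w' \<in> W M N")
    case True
    then have "distinct w" "distinct w'" by (auto dest: W_distinct)
    with True show ?thesis by (simp add: covers_def split_iff)
  qed (auto simp: covers_def)
qed

section \<open>The order as a condition on letters\<close>

definition shuffle_below :: "letter list \<Rightarrow> letter list \<Rightarrow> bool" where
  "shuffle_below u w \<longleftrightarrow>
     (\<forall>i. A i \<in> set w \<longrightarrow> A i \<in> set u) \<and> (\<forall>j. X j \<in> set u \<longrightarrow> X j \<in> set w) \<and>
     filter (\<lambda>l. l \<in> set w) u = filter (\<lambda>l. l \<in> set u) w"

lemma shuffle_below_refl: "shuffle_below u u"
  by (simp add: shuffle_below_def)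

lemma shuffle_below_AD: "shuffle_below u w \<Longrightarrow> A i \<in> set w \<Longrightarrow> A i \<in> set u"
  by (simp add: shuffle_below_def)

lemma shuffle_below_XD: "shuffle_below u w \<Longrightarrow> X j \<in> set u \<Longrightarrow> X j \<in> set w"
  by (simp add: shuffle_below_def)

lemma filter_removeAll: "filter P (removeAll a xs) = removeAll a (filter P xs)"
  by (induction xs) auto

lemma filter_mem_and_neq:
  "filter (\<lambda>l. l \<in> S \<and> l \<noteq> a) u = removeAll a (filter (\<lambda>l. l \<in> S) u)"
  by (induction u) auto

lemma filter_eq_or_notin: "a \<notin> set u \<Longrightarrow> filter (\<lambda>l. l = a \<or> P l) u = filter P u"
  by (induction u) auto

lemma shuffle_below_removeAll_A_right:
  "shuffle_below u w \<Longrightarrow> shuffle_below u (removeAll (A i) w)"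
  by (auto simp: shuffle_below_def filter_removeAll filter_mem_and_neq)

lemma shuffle_below_removeAll_X_right:
  "X j \<notin> set u \<Longrightarrow> shuffle_below u (removeAll (X j) w) \<longleftrightarrow> shuffle_below u w"
  by (auto simp: shuffle_below_def filter_removeAll filter_mem_and_neq)

lemma shuffle_below_removeAll_A_left:
  "A i \<notin> set w \<Longrightarrow> shuffle_below (removeAll (A i) u) w \<longleftrightarrow> shuffle_below u w"
  by (auto simp: shuffle_below_def filter_removeAll filter_mem_and_neq)

lemma shuffle_below_Cons_A_left:
  "A i \<notin> set w \<Longrightarrow> shuffle_below (A i # u) w \<longleftrightarrow> shuffle_below u w"
  by (auto simp: shuffle_below_def filter_eq_or_notin)

lemma shuffle_below_Cons_X_right:
  "X j \<notin> set u \<Longrightarrow> shuffle_below u (X j # w) \<longleftrightarrow> shuffle_below u w"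
  by (auto simp: shuffle_below_def filter_eq_or_notin)

lemma shuffle_below_Cons_Cons:
  "l \<notin> set u \<Longrightarrow> l \<notin> set w \<Longrightarrow> shuffle_below (l # u) (l # w) \<longleftrightarrow> shuffle_below u w"
  by (auto simp: shuffle_below_def filter_eq_or_notin)

lemma shuffle_below_Cons_heads:
  "shuffle_below (p # u) (q # w) \<Longrightarrow> q \<in> set (p # u) \<Longrightarrow> p \<in> set (q # w) \<Longrightarrow> p = q"
  unfolding shuffle_below_def by auto

lemma shuffle_below_cases:
  assumes "shuffle_below u v"
  obtains (Nil) "u = []" "v = []"
    | (common) c u' v' where "u = c # u'" "v = c # v'"
    | (del) i u' where "u = A i # u'" "A i \<notin> set v" "\<And>q v'. v = q # v' \<Longrightarrow> q \<in> set u"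
    | (ins) j v' where "v = X j # v'" "X j \<notin> set u" "\<And>p u'. u = p # u' \<Longrightarrow> p \<in> set v"
    | (both) i u' j v' where "u = A i # u'" "v = X j # v'" "A i \<notin> set v" "X j \<notin> set u"
proof -
  have hd_u: "\<exists>i. p = A i" if "p \<in> set u" "p \<notin> set v" for p
    using that shuffle_below_XD[OF assms] letter.exhaust by metis
  have hd_v: "\<exists>j. q = X j" if "q \<in> set v" "q \<notin> set u" for q
    using that shuffle_below_AD[OF assms] letter.exhaust by metis
  show ?thesis
  proof (cases u)
    case Nil
    show ?thesis
    proof (cases v)
      case Nil
      with \<open>u = []\<close> show ?thesis by (rule that(1))
    next
      case (Cons q v')
      with \<open>u = []\<close> hd_v obtain j where "q = X j" by auto
      with \<open>u = []\<close> Cons show ?thesis by (intro that(4)[of j v']) auto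
    qed
  next
    case (Cons p u')
    show ?thesis
    proof (cases v)
      case Nil
      with Cons hd_u obtain i where "p = A i" by auto
      with Cons Nil show ?thesis by (intro that(3)[of i u']) auto
    next
      case v: (Cons q v')
      show ?thesis
      proof (cases "p = q")
        case True
        with Cons v show ?thesis by (intro that(2)[of p u' v']) auto
      next
        case False
        then have "p \<notin> set v \<or> q \<notin> set u"
          using assms Cons v shuffle_below_Cons_heads by blast
        then consider "p \<notin> set v" "q \<in> set u" | "p \<in> set v" "q \<notin> set u" | "p \<notin> set v" "q \<notin> set u"
          by blast
        then show ?thesis
        proof cases
          case 1
          with Cons hd_u obtain i where "p = A i" by auto
          with 1 Cons v show ?thesis by (intro that(3)[of i u']) auto
        next
          case 2
          with v hd_v obtain j where "q = X j" by auto
          with 2 Cons v show ?thesis by (intro that(4)[of j v']) auto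
        next
          case 3
          obtain i where "p = A i"
            using hd_u 3 Cons by auto
          moreover obtain j where "q = X j"
            using hd_v 3 v by auto
          ultimately show ?thesis
            using 3 Cons v by (intro that(5)[of i u' j v']) auto
        qed
      qed
    qed
  qed
qed

lemma covers_shuffle_below:
  assumes "covers M N w w'" and "shuffle_below u w"
  shows "shuffle_below u w'"
  using assms(1) unfolding covers_iff_removeAll
proof (elim conjE disjE exE)
  fix i assume "w' = removeAll (A i) w"
  then show ?thesis using assms(2) by (simp add: shuffle_below_removeAll_A_right)
next
  fix j assume w: "w = removeAll (X j) w'"
  then have "X j \<notin> set u" using assms(2) shuffle_below_XD by fastforce
  then show ?thesis using assms(2) w shuffle_below_removeAll_X_right by blast
qed

lemma shuffle_le_imp_shuffle_below: "shuffle_le M N u w \<Longrightarrow> shuffle_below u w"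
  unfolding shuffle_le_def
  by (induction rule: rtranclp_induct) (auto intro: shuffle_below_refl covers_shuffle_below)

lemma shuffle_below_imp_shuffle_le:
  "u \<in> W M N \<Longrightarrow> w \<in> W M N \<Longrightarrow> shuffle_below u w \<Longrightarrow> shuffle_le M N u w"
proof (induction "length u + length w" arbitrary: u w rule: less_induct)
  case less
  show ?case
  proof (cases "\<exists>i. A i \<in> set u \<and> A i \<notin> set w")
    case True
    then obtain i where i: "A i \<in> set u" "A i \<notin> set w" by blast
    let ?u' = "removeAll (A i) u"
    have "covers M N u ?u'"
      using less.prems i by (auto simp: covers_iff_removeAll removeAll_in_W)
    moreover have "shuffle_le M N ?u' w"
      using less i by (intro less.hyps)
        (auto simp: removeAll_in_W shuffle_below_removeAll_A_left length_removeAll_less)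
    ultimately show ?thesis
      unfolding shuffle_le_def by (rule converse_rtranclp_into_rtranclp)
  next
    case noA: False
    show ?thesis
    proof (cases "\<exists>j. X j \<in> set w \<and> X j \<notin> set u")
      case True
      then obtain j where j: "X j \<in> set w" "X j \<notin> set u" by blast
      let ?w' = "removeAll (X j) w"
      have "shuffle_le M N u ?w'"
        using less j by (intro less.hyps)
          (auto simp: removeAll_in_W shuffle_below_removeAll_X_right length_removeAll_less)
      moreover have "covers M N ?w' w"
        using less.prems j by (auto simp: covers_iff_removeAll removeAll_in_W)
      ultimately show ?thesis
        unfolding shuffle_le_def by (rule rtranclp.rtrancl_into_rtrancl)
    next
      case False
      with noA less.prems(3) have "set u = set w"
        unfolding shuffle_below_def by (metis letter.exhaust subsetI subset_antisym)
      with less.prems(3) have "u = w"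
        by (simp add: shuffle_below_def)
      then show ?thesis by (simp add: shuffle_le_def)
    qed
  qed
qed

lemma shuffle_le_iff_shuffle_below:
  "u \<in> W M N \<Longrightarrow> w \<in> W M N \<Longrightarrow> shuffle_le M N u w \<longleftrightarrow> shuffle_below u w"
  using shuffle_le_imp_shuffle_below shuffle_below_imp_shuffle_le by blast

section \<open>Heights and ranks\<close>

definition height :: "letter list \<Rightarrow> int" where
  "height w = int (length (xsubs w)) - int (length (asubs w))"

lemma height_Nil [simp]: "height [] = 0"
  by (simp add: height_def)

lemma height_Cons_A [simp]: "height (A i # w) = height w - 1"
  by (simp add: height_def)

lemma height_Cons_X [simp]: "height (X j # w) = height w + 1"
  by (simp add: height_def)

lemma length_asubs: "w \<in> W M N \<Longrightarrow> length (asubs w) = card {i. A i \<in> set w}"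
  by (metis W_def distinct_card mem_Collect_eq set_asubs shuffle_word_def strict_sorted_iff)

lemma length_xsubs: "w \<in> W M N \<Longrightarrow> length (xsubs w) = card {j. X j \<in> set w}"
  by (metis W_def distinct_card mem_Collect_eq set_xsubs shuffle_word_def strict_sorted_iff)

lemma shuffle_rank_eq_height:
  assumes "w \<in> W M N"
  shows "int (shuffle_rank M N w) = int M + height w"
proof -
  have "{i. A i \<in> set w} \<subseteq> {1..M}"
    using assms by (auto simp: W_def shuffle_word_def)
  then have "length (asubs w) \<le> M"
    using assms card_mono[of "{1..M}"] by (fastforce simp: length_asubs)
  then show ?thesis by (simp add: shuffle_rank_def height_def)
qed

lemma height_mono:
  assumes "u \<in> W M N" "w \<in> W M N" "shuffle_below u w"
  shows "height u \<le> height w"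
proof -
  have "finite {i. A i \<in> set u}" "finite {j. X j \<in> set w}"
    using finite_set[of "asubs u"] finite_set[of "xsubs w"] by simp_all
  then have "card {i. A i \<in> set w} \<le> card {i. A i \<in> set u}"
    and "card {j. X j \<in> set u} \<le> card {j. X j \<in> set w}"
    using assms(3) by (auto intro!: card_mono simp: shuffle_below_def)
  with assms(1,2) show ?thesis
    by (simp add: height_def length_asubs length_xsubs)
qed

lemma shuffle_rank_mono:
  assumes "u \<in> W M N" "w \<in> W M N" "shuffle_below u w"
  shows "shuffle_rank M N u \<le> shuffle_rank M N w"
  using height_mono[OF assms] shuffle_rank_eq_height[OF assms(1)] shuffle_rank_eq_height[OF assms(2)]
  by linarith

section \<open>Intervals\<close>

lemma mem_shuffle_interval:
  "u \<in> W M N \<Longrightarrow> v \<in> W M N \<Longrightarrow>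
    w \<in> shuffle_interval M N u v \<longleftrightarrow> w \<in> W M N \<and> shuffle_below u w \<and> shuffle_below w v"
  by (auto simp: shuffle_interval_def shuffle_le_iff_shuffle_below)

lemma shuffle_interval_subset_W: "shuffle_interval M N u v \<subseteq> W M N"
  by (auto simp: shuffle_interval_def)

lemma finite_shuffle_interval: "finite (shuffle_interval M N u v)"
  using finite_W shuffle_interval_subset_W by (rule finite_subset[rotated])

lemma height_le_mem_shuffle_interval:
  "u \<in> W M N \<Longrightarrow> v \<in> W M N \<Longrightarrow> w \<in> shuffle_interval M N u v \<Longrightarrow> height u \<le> height w"
  by (auto simp: mem_shuffle_interval intro: height_mono)

lemma letters_interval:
  assumes "u \<in> W M N" "v \<in> W M N" "w \<in> shuffle_interval M N u v"
  shows "set u \<inter> set v \<subseteq> set w" and "set w \<subseteq> set u \<union> set v"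
proof -
  have "shuffle_below u w" "shuffle_below w v"
    using assms by (simp_all add: mem_shuffle_interval)
  then show "set u \<inter> set v \<subseteq> set w" "set w \<subseteq> set u \<union> set v"
    by (auto simp: shuffle_below_def) (metis letter.exhaust)+
qed

lemma Cons_A_in_W_if_below:
  "A i # u \<in> W M N \<Longrightarrow> w \<in> W M N \<Longrightarrow> shuffle_below u w \<Longrightarrow> A i # w \<in> W M N"
  by (auto simp: Cons_A_in_W_iff dest: shuffle_below_AD)

lemma Cons_X_in_W_if_below:
  "X j # v \<in> W M N \<Longrightarrow> w \<in> W M N \<Longrightarrow> shuffle_below w v \<Longrightarrow> X j # w \<in> W M N"
  by (auto simp: Cons_X_in_W_iff dest: shuffle_below_XD)

lemma shuffle_interval_Nil: "shuffle_interval M N [] [] = {[]}"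
proof -
  have "w = []" if "shuffle_below [] w" "shuffle_below w []" for w
    using that by (cases w; cases "hd w") (auto simp: shuffle_below_def)
  then show ?thesis
    by (auto simp: mem_shuffle_interval shuffle_below_refl)
qed

lemma Cons_mem_shuffle_interval_Cons_Cons:
  assumes "c # u \<in> W M N" "c # v \<in> W M N"
  shows "c # w \<in> shuffle_interval M N (c # u) (c # v) \<longleftrightarrow> w \<in> shuffle_interval M N u v"
proof -
  have u: "u \<in> W M N" "c \<notin> set u" and v: "v \<in> W M N" "c \<notin> set v"
    using assms W_ConsD by blast+
  have "c # w \<in> W M N" if "w \<in> W M N" "shuffle_below u w" "shuffle_below w v"
    using assms that by (cases c) (auto intro: Cons_A_in_W_if_below Cons_X_in_W_if_below)
  moreover have "c \<notin> set w" if "shuffle_below u w" "shuffle_below w v"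
    using u v that by (cases c) (auto dest: shuffle_below_AD shuffle_below_XD)
  ultimately show ?thesis
    using assms u v by (auto simp: mem_shuffle_interval shuffle_below_Cons_Cons dest: W_ConsD)
qed

lemma Cons_A_mem_shuffle_interval_iff:
  assumes "A i # u \<in> W M N" "v \<in> W M N" "A i \<notin> set v"
  shows "A i # w \<in> shuffle_interval M N (A i # u) v \<longleftrightarrow> w \<in> shuffle_interval M N u v"
proof -
  have u: "u \<in> W M N" "A i \<notin> set u"
    using assms W_ConsD by blast+
  have "A i \<notin> set w" if "shuffle_below u w"
    using u that by (auto dest: shuffle_below_AD)
  then show ?thesis
    using assms u by (auto simp: mem_shuffle_interval shuffle_below_Cons_Cons shuffle_below_Cons_A_left
        intro: Cons_A_in_W_if_below dest: W_ConsD)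
qed

lemma Cons_X_mem_shuffle_interval_iff:
  assumes "X j # v \<in> W M N" "u \<in> W M N" "X j \<notin> set u"
  shows "X j # w \<in> shuffle_interval M N u (X j # v) \<longleftrightarrow> w \<in> shuffle_interval M N u v"
proof -
  have v: "v \<in> W M N" "X j \<notin> set v"
    using assms W_ConsD by blast+
  have "X j \<notin> set w" if "shuffle_below w v"
    using v that by (auto dest: shuffle_below_XD)
  then show ?thesis
    using assms v by (auto simp: mem_shuffle_interval shuffle_below_Cons_Cons shuffle_below_Cons_X_right
        intro: Cons_X_in_W_if_below dest: W_ConsD)
qed

lemma mem_shuffle_interval_Cons_A_left:
  assumes "A i # u \<in> W M N" "v \<in> W M N"
  shows "w \<in> shuffle_interval M N u v \<longleftrightarrow> w \<in> shuffle_interval M N (A i # u) v \<and> A i \<notin> set w"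
proof -
  have u: "u \<in> W M N" "A i \<notin> set u"
    using assms W_ConsD by blast+
  have "A i \<notin> set w" if "shuffle_below u w"
    using u that by (auto dest: shuffle_below_AD)
  then show ?thesis
    using assms u by (auto simp: mem_shuffle_interval shuffle_below_Cons_A_left)
qed

lemma mem_shuffle_interval_Cons_X_right:
  assumes "X j # v \<in> W M N" "u \<in> W M N"
  shows "w \<in> shuffle_interval M N u v \<longleftrightarrow> w \<in> shuffle_interval M N u (X j # v) \<and> X j \<notin> set w"
proof -
  have v: "v \<in> W M N" "X j \<notin> set v"
    using assms W_ConsD by blast+
  have "X j \<notin> set w" if "shuffle_below w v"
    using v that by (auto dest: shuffle_below_XD)
  then show ?thesis
    using assms v by (auto simp: mem_shuffle_interval shuffle_below_Cons_X_right)
qed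

lemma Cons_mem_shuffle_interval_hd:
  assumes "u \<in> W M N" "v \<in> W M N" "y # w \<in> shuffle_interval M N u v"
  shows "u = p # u' \<Longrightarrow> y \<in> set u \<Longrightarrow> p \<in> set (y # w) \<Longrightarrow> y = p"
    and "v = q # v' \<Longrightarrow> y \<in> set v \<Longrightarrow> q \<in> set (y # w) \<Longrightarrow> y = q"
  using assms by (auto simp: mem_shuffle_interval dest: shuffle_below_Cons_heads)

lemma shuffle_interval_Cons_Cons:
  assumes "c # u \<in> W M N" "c # v \<in> W M N"
  shows "shuffle_interval M N (c # u) (c # v) = Cons c ` shuffle_interval M N u v"
proof (intro set_eqI iffI)
  fix w assume w: "w \<in> shuffle_interval M N (c # u) (c # v)"
  then have "c \<in> set w"
    using letters_interval(1)[OF assms w] by auto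
  then obtain y w' where w': "w = y # w'"
    by (cases w) auto
  have "y \<in> set (c # u) \<or> y \<in> set (c # v)"
    using letters_interval(2)[OF assms w] w' by auto
  then have "y = c"
    using Cons_mem_shuffle_interval_hd[OF assms w[unfolded w']] \<open>c \<in> set w\<close> w' by blast
  with w w' show "w \<in> Cons c ` shuffle_interval M N u v"
    using Cons_mem_shuffle_interval_Cons_Cons[OF assms] by auto
qed (use Cons_mem_shuffle_interval_Cons_Cons[OF assms] in auto)

lemma shuffle_interval_Cons_A:
  assumes u: "A i # u \<in> W M N" and v: "v \<in> W M N" "A i \<notin> set v"
    and hd_v: "\<And>q v'. v = q # v' \<Longrightarrow> q \<in> set (A i # u)"
  shows "shuffle_interval M N (A i # u) v = shuffle_interval M N u v \<union> Cons (A i) ` shuffle_interval M N u v"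
proof (intro set_eqI iffI)
  fix w assume w: "w \<in> shuffle_interval M N (A i # u) v"
  show "w \<in> shuffle_interval M N u v \<union> Cons (A i) ` shuffle_interval M N u v"
  proof (cases "A i \<in> set w")
    case False
    then show ?thesis using mem_shuffle_interval_Cons_A_left[OF u v(1)] w by blast
  next
    case True
    then obtain y w' where w': "w = y # w'"
      by (cases w) auto
    have "y \<in> set (A i # u)"
    proof (cases v)
      case (Cons q v')
      then have "q \<in> set w"
        using hd_v letters_interval(1)[OF u v(1) w] by auto
      then show ?thesis
        using letters_interval(2)[OF u v(1) w] Cons_mem_shuffle_interval_hd(2)[OF u v(1) w[unfolded w'] Cons] 
          hd_v[OF Cons] w' by auto
    qed (use letters_interval(2)[OF u v(1) w] w' in auto)
    then have "y = A i"
      using Cons_mem_shuffle_interval_hd(1)[OF u v(1) w[unfolded w']] True w' by blast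
    with w w' show ?thesis
      using Cons_A_mem_shuffle_interval_iff[OF u v] by auto
  qed
qed (use Cons_A_mem_shuffle_interval_iff[OF u v] mem_shuffle_interval_Cons_A_left[OF u v(1)] in auto)

lemma shuffle_interval_Cons_X:
  assumes u: "u \<in> W M N" "X j \<notin> set u" and v: "X j # v \<in> W M N"
    and hd_u: "\<And>p u'. u = p # u' \<Longrightarrow> p \<in> set (X j # v)"
  shows "shuffle_interval M N u (X j # v) = shuffle_interval M N u v \<union> Cons (X j) ` shuffle_interval M N u v"
proof (intro set_eqI iffI)
  fix w assume w: "w \<in> shuffle_interval M N u (X j # v)"
  show "w \<in> shuffle_interval M N u v \<union> Cons (X j) ` shuffle_interval M N u v"
  proof (cases "X j \<in> set w")
    case False
    then show ?thesis using mem_shuffle_interval_Cons_X_right[OF v u(1)] w by blast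
  next
    case True
    then obtain y w' where w': "w = y # w'"
      by (cases w) auto
    have "y \<in> set (X j # v)"
    proof (cases u)
      case (Cons p u')
      then have "p \<in> set w"
        using hd_u letters_interval(1)[OF u(1) v w] by auto
      then show ?thesis
        using letters_interval(2)[OF u(1) v w] Cons_mem_shuffle_interval_hd(1)[OF u(1) v w[unfolded w'] Cons]
          hd_u[OF Cons] w' by auto
    qed (use letters_interval(2)[OF u(1) v w] w' in auto)
    then have "y = X j"
      using Cons_mem_shuffle_interval_hd(2)[OF u(1) v w[unfolded w']] True w' by blast
    with w w' show ?thesis
      using Cons_X_mem_shuffle_interval_iff[OF v u] by auto
  qed
qed (use Cons_X_mem_shuffle_interval_iff[OF v u] mem_shuffle_interval_Cons_X_right[OF v u(1)] in auto)

(* The four parts: w omits a; w contains a but not x; w contains both and starts with a;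
   w contains both and starts with x. *)
lemma shuffle_interval_Cons_A_Cons_X:
  assumes u: "A i # u \<in> W M N" "X j \<notin> set u" and v: "X j # v \<in> W M N" "A i \<notin> set v"
  defines "I \<equiv> shuffle_interval M N"
  shows "I (A i # u) (X j # v) = I u (X j # v) \<union> (I (A i # u) v - I u v)
    \<union> Cons (A i) ` (I u (X j # v) - I u v) \<union> Cons (X j) ` (I (A i # u) v - I u v)"
proof -
  have uW: "u \<in> W M N" and vW: "v \<in> W M N"
    using u v W_ConsD by blast+
  have u': "X j \<notin> set (A i # u)" and v': "A i \<notin> set (X j # v)"
    using u v by auto
  note without_A = mem_shuffle_interval_Cons_A_left[OF u(1) v(1), folded I_def]
  note without_X = mem_shuffle_interval_Cons_X_right[OF v(1) u(1), folded I_def]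
  note Cons_A = Cons_A_mem_shuffle_interval_iff[OF u(1) v(1) v', folded I_def]
  note Cons_X = Cons_X_mem_shuffle_interval_iff[OF v(1) u(1) u', folded I_def]
  have A_notin: "w \<notin> I u v" if "A i \<in> set w" for w
    using that mem_shuffle_interval_Cons_A_left[OF u(1) vW] by (auto simp: I_def)
  have X_notin: "w \<notin> I u v" if "X j \<in> set w" for w
    using that mem_shuffle_interval_Cons_X_right[OF v(1) uW] by (auto simp: I_def)
  have "w \<in> I u (X j # v) \<or> w \<in> I (A i # u) v - I u v \<or>
      w \<in> Cons (A i) ` (I u (X j # v) - I u v) \<or> w \<in> Cons (X j) ` (I (A i # u) v - I u v)"
    if w: "w \<in> I (A i # u) (X j # v)" for w
  proof (cases "A i \<in> set w \<and> X j \<in> set w")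
    case True
    then obtain y w' where w': "w = y # w'"
      by (cases w) auto
    have "y \<in> set (A i # u) \<or> y \<in> set (X j # v)"
      using letters_interval(2)[OF u(1) v(1) w[unfolded I_def]] w' by auto
    then have "y = A i \<or> y = X j"
      using Cons_mem_shuffle_interval_hd[OF u(1) v(1) w[unfolded I_def w']] True w' by blast
    then show ?thesis
      using w w' True Cons_A Cons_X A_notin X_notin by auto
  qed (use w without_A without_X A_notin in auto)
  moreover have "I u (X j # v) \<subseteq> I (A i # u) (X j # v)" and "I (A i # u) v \<subseteq> I (A i # u) (X j # v)"
    using without_A without_X by blast+
  ultimately show ?thesis
    using Cons_A Cons_X by blast
qed

section \<open>Rank generating polynomials of intervals\<close>

definition rank_poly :: "int \<Rightarrow> letter list set \<Rightarrow> int poly" where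
  "rank_poly b S = (\<Sum>w\<in>S. monom 1 (nat (height w - b)))"

lemma rank_poly_union:
  "finite S \<Longrightarrow> finite T \<Longrightarrow> S \<inter> T = {} \<Longrightarrow>
    rank_poly b (S \<union> T) = rank_poly b S + rank_poly b T"
  unfolding rank_poly_def by (rule sum.union_disjoint)

lemma rank_poly_diff:
  "finite S \<Longrightarrow> T \<subseteq> S \<Longrightarrow> rank_poly b (S - T) = rank_poly b S - rank_poly b T"
  unfolding rank_poly_def by (rule sum_diff) (auto intro: finite_subset)

lemma rank_poly_image_Cons: "rank_poly b (Cons c ` S) = rank_poly (b - height [c]) S"
proof -
  have "rank_poly b (Cons c ` S) = (\<Sum>w\<in>S. monom 1 (nat (height (c # w) - b)))"
    unfolding rank_poly_def by (subst sum.reindex) (simp_all add: inj_on_def)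
  also have "\<dots> = rank_poly (b - height [c]) S"
    unfolding rank_poly_def by (cases c) (simp_all add: algebra_simps)
  finally show ?thesis .
qed

lemma rank_poly_pred:
  assumes "\<And>w. w \<in> S \<Longrightarrow> b \<le> height w"
  shows "rank_poly (b - 1) S = [:0, 1:] * rank_poly b S"
proof -
  have "monom 1 (nat (height w - (b - 1))) = [:0, 1:] * (monom 1 (nat (height w - b)) :: int poly)" if "w \<in> S" for w
  proof -
    have "nat (height w - (b - 1)) = Suc (nat (height w - b))"
      using assms[OF that] by simp
    then show ?thesis by (simp add: monom_Suc)
  qed
  then show ?thesis
    unfolding rank_poly_def by (simp add: sum_distrib_left)
qed

lemma coeff_rank_poly:
  assumes "finite S"
  shows "coeff (rank_poly b S) k = int (card {w \<in> S. nat (height w - b) = k})"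
proof -
  have "coeff (rank_poly b S) k = (\<Sum>w\<in>S. if nat (height w - b) = k then 1 else 0)"
    unfolding rank_poly_def by (simp add: coeff_sum)
  also have "\<dots> = int (card {w \<in> S. nat (height w - b) = k})"
    using assms by (subst sum.inter_filter[symmetric]) simp_all
  finally show ?thesis .
qed

definition interval_poly :: "nat \<Rightarrow> nat \<Rightarrow> letter list \<Rightarrow> letter list \<Rightarrow> int poly" where
  "interval_poly M N u v = rank_poly (height u) (shuffle_interval M N u v)"

lemma interval_poly_Nil: "interval_poly M N [] [] = 1"
  by (simp add: interval_poly_def rank_poly_def shuffle_interval_Nil)

lemma interval_poly_Cons_Cons:
  "c # u \<in> W M N \<Longrightarrow> c # v \<in> W M N \<Longrightarrow> interval_poly M N (c # u) (c # v) = interval_poly M N u v"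
  by (cases c) (simp_all add: interval_poly_def shuffle_interval_Cons_Cons rank_poly_image_Cons)

lemma interval_poly_Cons_A:
  assumes u: "A i # u \<in> W M N" and v: "v \<in> W M N" "A i \<notin> set v"
    and hd_v: "\<And>q v'. v = q # v' \<Longrightarrow> q \<in> set (A i # u)"
  shows "interval_poly M N (A i # u) v = [:1, 1:] * interval_poly M N u v"
proof -
  let ?I = "shuffle_interval M N u v"
  have uW: "u \<in> W M N"
    using u W_ConsD by blast
  have "?I \<inter> Cons (A i) ` ?I = {}"
    using mem_shuffle_interval_Cons_A_left[OF u v(1)] by auto
  then have "interval_poly M N (A i # u) v = rank_poly (height u - 1) ?I + rank_poly (height u) ?I"
    by (simp add: interval_poly_def shuffle_interval_Cons_A[OF assms] rank_poly_union
        finite_shuffle_interval rank_poly_image_Cons)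
  also have "\<dots> = [:1, 1:] * interval_poly M N u v"
    using height_le_mem_shuffle_interval[OF uW v(1)]
    by (simp add: interval_poly_def rank_poly_pred algebra_simps)
  finally show ?thesis .
qed

lemma interval_poly_Cons_X:
  assumes u: "u \<in> W M N" "X j \<notin> set u" and v: "X j # v \<in> W M N"
    and hd_u: "\<And>p u'. u = p # u' \<Longrightarrow> p \<in> set (X j # v)"
  shows "interval_poly M N u (X j # v) = [:1, 1:] * interval_poly M N u v"
proof -
  let ?I = "shuffle_interval M N u v"
  have vW: "v \<in> W M N"
    using v W_ConsD by blast
  have "?I \<inter> Cons (X j) ` ?I = {}"
    using mem_shuffle_interval_Cons_X_right[OF v u(1)] by auto
  then have "interval_poly M N u (X j # v) = rank_poly (height u) ?I + rank_poly (height u - 1) ?I"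
    by (simp add: interval_poly_def shuffle_interval_Cons_X[OF assms] rank_poly_union
        finite_shuffle_interval rank_poly_image_Cons)
  also have "\<dots> = [:1, 1:] * interval_poly M N u v"
    using height_le_mem_shuffle_interval[OF u(1) vW]
    by (simp add: interval_poly_def rank_poly_pred algebra_simps)
  finally show ?thesis .
qed

lemma rank_poly_shuffle_interval_Cons_A_Cons_X:
  assumes u: "A i # u \<in> W M N" "X j \<notin> set u" and v: "X j # v \<in> W M N" "A i \<notin> set v"
  defines "I1 \<equiv> shuffle_interval M N u (X j # v)" and "I2 \<equiv> shuffle_interval M N (A i # u) v"
    and "I3 \<equiv> shuffle_interval M N u v"
  shows "rank_poly b (shuffle_interval M N (A i # u) (X j # v)) =
    rank_poly b I1 + rank_poly b (I2 - I3) + rank_poly b (Cons (A i) ` (I1 - I3))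
      + rank_poly b (Cons (X j) ` (I2 - I3))"
proof -
  have uW: "u \<in> W M N" and vW: "v \<in> W M N"
    using u v W_ConsD by blast+
  note without_A = mem_shuffle_interval_Cons_A_left[OF u(1)]
  note without_X = mem_shuffle_interval_Cons_X_right[OF v(1)]
  have A_notin_I1: "A i \<notin> set w" if "w \<in> I1" for w
    using that without_A[OF v(1)] unfolding I1_def by blast
  have X_notin_I2: "X j \<notin> set w" if "w \<in> I2" for w
    using that without_X[OF u(1)] unfolding I2_def by blast
  have A_in: "A i \<in> set w" if "w \<in> I2 - I3" for w
    using that without_A[OF vW] unfolding I2_def I3_def by blast
  have X_in: "X j \<in> set w" if "w \<in> I1 - I3" for w
    using that without_X[OF uW] unfolding I1_def I3_def by blast
  have "I1 \<inter> (I2 - I3) = {}"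
    using A_notin_I1 A_in by blast
  moreover have "(I1 \<union> (I2 - I3)) \<inter> Cons (A i) ` (I1 - I3) = {}"
    using A_notin_I1 X_notin_I2 X_in by fastforce
  moreover have "(I1 \<union> (I2 - I3) \<union> Cons (A i) ` (I1 - I3)) \<inter> Cons (X j) ` (I2 - I3) = {}"
    using A_notin_I1 X_notin_I2 A_in by fastforce
  ultimately show ?thesis
    unfolding I1_def I2_def I3_def
    by (simp add: shuffle_interval_Cons_A_Cons_X[OF assms(1-4)] rank_poly_union finite_shuffle_interval)
qed

lemma interval_poly_Cons_A_Cons_X:
  assumes u: "A i # u \<in> W M N" "X j \<notin> set u" and v: "X j # v \<in> W M N" "A i \<notin> set v"
  shows "interval_poly M N (A i # u) (X j # v) =
    [:1, 1:] * interval_poly M N u (X j # v) + [:1, 1:] * interval_poly M N (A i # u) v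
      - [:1, 1, 1:] * interval_poly M N u v"
proof -
  define I1 I2 I3
    where "I1 = shuffle_interval M N u (X j # v)" and "I2 = shuffle_interval M N (A i # u) v"
      and "I3 = shuffle_interval M N u v"
  define Q1 Q2 Q3
    where "Q1 = interval_poly M N u (X j # v)" and "Q2 = interval_poly M N (A i # u) v"
      and "Q3 = interval_poly M N u v"
  define t :: "int poly" where "t = [:0, 1:]"
  let ?R = "rank_poly (height u - 1)"
  have uW: "u \<in> W M N" and vW: "v \<in> W M N"
    using u v W_ConsD by blast+
  have I3_sub: "I3 \<subseteq> I1" "I3 \<subseteq> I2"
    unfolding I1_def I2_def I3_def
    using mem_shuffle_interval_Cons_A_left[OF u(1) vW] mem_shuffle_interval_Cons_X_right[OF v(1) uW]
    by blast+
  have fin: "finite I1" "finite I2"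
    unfolding I1_def I2_def by (simp_all add: finite_shuffle_interval)
  have bound1: "height u \<le> height w" if "w \<in> I1" for w
    using that height_le_mem_shuffle_interval[OF uW v(1)] unfolding I1_def by blast
  have bound2: "height u - 1 \<le> height w" if "w \<in> I2" for w
    using that height_le_mem_shuffle_interval[OF u(1) vW] unfolding I2_def by auto
  have R1: "?R I1 = t * Q1"
    using rank_poly_pred[of I1, OF bound1] by (simp add: Q1_def interval_poly_def t_def I1_def)
  have R3: "?R I3 = t * Q3"
    using rank_poly_pred[of I3, OF bound1] I3_sub by (auto simp: Q3_def interval_poly_def t_def I3_def)
  have R23: "?R (I2 - I3) = Q2 - t * Q3"
    using fin I3_sub R3 by (simp add: Q2_def interval_poly_def rank_poly_diff I2_def)
  have "?R (Cons (A i) ` (I1 - I3)) = Q1 - Q3"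
    using fin I3_sub by (simp add: Q1_def Q3_def interval_poly_def rank_poly_image_Cons rank_poly_diff I1_def I3_def)
  moreover have "?R (Cons (X j) ` (I2 - I3)) = t * ?R (I2 - I3)"
    unfolding rank_poly_image_Cons t_def using rank_poly_pred[of "I2 - I3" "height u - 1"] bound2 by simp
  ultimately have "interval_poly M N (A i # u) (X j # v) = t * Q1 + (Q2 - t * Q3) + (Q1 - Q3) + t * (Q2 - t * Q3)"
    using R1 R23 rank_poly_shuffle_interval_Cons_A_Cons_X[OF assms, of "height u - 1", folded I1_def I2_def I3_def]
    by (simp add: interval_poly_def)
  also have "\<dots> = [:1, 1:] * Q1 + [:1, 1:] * Q2 - [:1, 1, 1:] * Q3"
    by (simp add: t_def algebra_simps)
  finally show ?thesis
    unfolding Q1_def Q2_def Q3_def .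
qed

lemma palindromic_interval_poly:
  assumes "u \<in> W M N" "v \<in> W M N" "shuffle_below u v"
  shows "palindromic (nat (height v - height u)) (interval_poly M N u v)"
  using assms
proof (induction "length u + length v" arbitrary: u v rule: less_induct)
  case less
  note uW = less.prems(1) and vW = less.prems(2) and below = less.prems(3)
  have IH: "palindromic (nat (height v' - height u')) (interval_poly M N u' v')"
    if "length u' + length v' < length u + length v" "u' \<in> W M N" "v' \<in> W M N" "shuffle_below u' v'"
    for u' v'
    using less.hyps that by blast
  from below show ?case
  proof (cases rule: shuffle_below_cases)
    case Nil
    then show ?thesis
      by (simp add: interval_poly_Nil palindromic_one)
  next
    case (common c u' v')
    have u': "u' \<in> W M N" "c \<notin> set u'" and v': "v' \<in> W M N" "c \<notin> set v'"
      using W_ConsD uW vW unfolding common by blast+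
    have "shuffle_below u' v'"
      using below shuffle_below_Cons_Cons[OF u'(2) v'(2)] unfolding common by blast
    then have "palindromic (nat (height v' - height u')) (interval_poly M N u' v')"
      using IH u'(1) v'(1) common by simp
    moreover have "height v - height u = height v' - height u'"
      using common by (cases c) auto
    ultimately show ?thesis
      using uW vW unfolding common by (simp add: interval_poly_Cons_Cons)
  next
    case (del i u')
    have u': "u' \<in> W M N" "shuffle_below u' v"
      using W_ConsD uW below shuffle_below_Cons_A_left[OF del(2)] unfolding del(1) by blast+
    then have "palindromic (1 + nat (height v - height u')) ([:1, 1:] * interval_poly M N u' v)"
      using IH[OF _ u'(1) vW u'(2)] del(1) by (intro palindromic_mult palindromic_linear) simp
    moreover have "nat (height v - height u) = 1 + nat (height v - height u')"
      using height_mono[OF u'(1) vW u'(2)] del(1) by simp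
    ultimately show ?thesis
      using uW vW del by (simp add: interval_poly_Cons_A)
  next
    case (ins j v')
    have v': "v' \<in> W M N" "shuffle_below u v'"
      using W_ConsD vW below shuffle_below_Cons_X_right[OF ins(2)] unfolding ins(1) by blast+
    then have "palindromic (1 + nat (height v' - height u)) ([:1, 1:] * interval_poly M N u v')"
      using IH[OF _ uW v'(1) v'(2)] ins(1) by (intro palindromic_mult palindromic_linear) simp
    moreover have "nat (height v - height u) = 1 + nat (height v' - height u)"
      using height_mono[OF uW v'] ins(1) by simp
    ultimately show ?thesis
      using uW vW ins by (simp add: interval_poly_Cons_X)
  next
    case (both i u' j v')
    have u': "u' \<in> W M N" "shuffle_below u' v"
      using W_ConsD uW below shuffle_below_Cons_A_left[OF both(3)] unfolding both(1) by blast+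
    have v': "v' \<in> W M N" "shuffle_below u v'"
      using W_ConsD vW below shuffle_below_Cons_X_right[OF both(4)] unfolding both(2) by blast+
    have u'v': "shuffle_below u' v'"
      using u'(2) shuffle_below_Cons_X_right[of j u' v'] both(2,4) unfolding both(1) by simp
    define n where "n = nat (height v - height u)"
    have n: "n = 1 + nat (height v - height u')" "n = 1 + nat (height v' - height u)"
      "n = 2 + nat (height v' - height u')"
      using height_mono[OF u'(1) v'(1) u'v'] both(1,2) unfolding n_def by auto
    have "palindromic n ([:1, 1:] * interval_poly M N u' v)"
      unfolding n(1) using IH[OF _ u'(1) vW u'(2)] both(1) by (intro palindromic_mult palindromic_linear) simp
    moreover have "palindromic n ([:1, 1:] * interval_poly M N u v')"
      unfolding n(2) using IH[OF _ uW v'] both(2) by (intro palindromic_mult palindromic_linear) simp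
    moreover have "palindromic n ([:1, 1, 1:] * interval_poly M N u' v')"
      unfolding n(3) using IH[OF _ u'(1) v'(1) u'v'] both(1,2)
      by (intro palindromic_mult palindromic_quadratic) simp
    ultimately show ?thesis
      using uW vW both unfolding n_def
      by (simp add: interval_poly_Cons_A_Cons_X palindromic_add palindromic_diff)
  qed
qed

lemma coeff_interval_poly:
  assumes "u \<in> W M N" "v \<in> W M N"
  shows "coeff (interval_poly M N u v) k =
    int (card {w \<in> shuffle_interval M N u v. shuffle_rank M N w = shuffle_rank M N u + k})"
proof -
  have level: "nat (height w - height u) = k \<longleftrightarrow> shuffle_rank M N w = shuffle_rank M N u + k"
    if "w \<in> shuffle_interval M N u v" for w
  proof -
    have "w \<in> W M N"
      using that shuffle_interval_subset_W by blast
    then have "int (shuffle_rank M N w) = int (shuffle_rank M N u) + (height w - height u)"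
      using shuffle_rank_eq_height[OF assms(1)] shuffle_rank_eq_height[of w] by simp
    then show ?thesis
      using height_le_mem_shuffle_interval[OF assms that] by (auto simp: nat_eq_iff)
  qed
  show ?thesis
    unfolding interval_poly_def coeff_rank_poly[OF finite_shuffle_interval]
    using level by (intro arg_cong[where f = "\<lambda>S. int (card S)"]) blast
qed

theorem proposition2p4:
  fixes M N r :: nat and u v :: "letter list"
  assumes "u \<in> W M N" and "v \<in> W M N" and "shuffle_le M N u v"
  shows "card {w \<in> shuffle_interval M N u v. shuffle_rank M N w = shuffle_rank M N u + r}
       = card {w \<in> shuffle_interval M N u v. shuffle_rank M N w + r = shuffle_rank M N v}"
proof -
  define n where "n = nat (height v - height u)"
  have below: "shuffle_below u v"
    using assms(3) by (rule shuffle_le_imp_shuffle_below)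
  have palindromic: "palindromic n (interval_poly M N u v)"
    unfolding n_def using assms(1,2) below by (rule palindromic_interval_poly)
  have lower: "shuffle_rank M N u \<le> shuffle_rank M N w" if "w \<in> shuffle_interval M N u v" for w
    using that assms(1,2) by (auto simp: mem_shuffle_interval intro: shuffle_rank_mono)
  have rank_v: "shuffle_rank M N v = shuffle_rank M N u + n"
    using height_mono[OF assms(1,2) below] shuffle_rank_eq_height[OF assms(1)]
      shuffle_rank_eq_height[OF assms(2)] unfolding n_def by linarith
  show ?thesis
    unfolding rank_v
    by (rule palindromic_level_card_symmetric[OF palindromic coeff_interval_poly[OF assms(1,2)] lower])
qed

end
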